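(* Let $n\ge 2$, $a,b,c\in\mathbb{Z}_n$ with $a\neq 0$ and $c$ invertible in $\mathbb{Z}_n$, and $P(x,y)=a+bx+cy$. Then the groupoid $(\mathbb{Z}_n,* )$ with $x*y=P(x,y)$ has the cross inverse property if and only if $bc\equiv 1\pmod n$.
   Context: $\mathbb{Z}_n$ is the ring of integers modulo $n$. Since $c$ is invertible, for each $x$ the map $y\mapsto x*y$ is a bijection, so there is a unique $e_\rho(x)$ with $x*e_\rho(x)=x$ (local right identity) and a unique $x^\rho$ with $x*x^\rho=e_\rho(x)$ (right inverse). The cross inverse property means $(x*y)*x^\rho=y$ for all $x,y\in\mathbb{Z}_n$. *)

theory Defs
  imports "HOL-Number_Theory.Number_Theory"
begin

text \<open>Z_n is modelled by the carrier {0..<n} of integers with arithmetic mod n.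
  The groupoid operation x * y = P(x,y) = a + b x + c y (mod n).\<close>

definition lin_op :: "int \<Rightarrow> int \<Rightarrow> int \<Rightarrow> int \<Rightarrow> int \<Rightarrow> int \<Rightarrow> int" where
  "lin_op n a b c x y = (a + b * x + c * y) mod n"

definition loc_right_id :: "int \<Rightarrow> (int \<Rightarrow> int \<Rightarrow> int) \<Rightarrow> int \<Rightarrow> int" where
  "loc_right_id n op x = (THE e. e \<in> {0..<n} \<and> op x e = x)"

definition right_inv :: "int \<Rightarrow> (int \<Rightarrow> int \<Rightarrow> int) \<Rightarrow> int \<Rightarrow> int" where
  "right_inv n op x = (THE r. r \<in> {0..<n} \<and> op x r = loc_right_id n op x)"

definition cross_inverse_prop :: "int \<Rightarrow> (int \<Rightarrow> int \<Rightarrow> int) \<Rightarrow> bool" where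
  "cross_inverse_prop n op =
     (\<forall>x\<in>{0..<n}. \<forall>y\<in>{0..<n}. op (op x y) (right_inv n op x) = y)"

end

theory Submission
  imports Defs
begin

text \<open>
  Fix an inverse u of c modulo n, i.e. c u \<equiv> 1.  Since y \<mapsto> x * y is
  the affine map y \<mapsto> (a + b x) + c y, the equation x * e = t has the unique solution
  e \<equiv> u (t - a - b x) in Z_n.  Hence the local right identity is
  e(x) \<equiv> u (x - a - b x) and the right inverse is x^\<rho> \<equiv> u (e(x) - a - b x), so
  c x^\<rho> \<equiv> e(x) - a - b x and a direct computation gives the closed form
      (x * y) * x^\<rho> \<equiv> b c y + (b - u)(a + (b - 1) x)   (mod n).
\<close>

lemma cong_cancel_inverse:
  fixes n c u z :: int
  assumes "[c * u = 1] (mod n)"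
  shows "[c * (u * z) = z] (mod n)"
proof -
  have "[c * u * z = 1 * z] (mod n)" using assms by (rule cong_scalar_right)
  then show ?thesis by (simp add: mult.assoc)
qed

lemma the_affine_solution_mod:
  fixes n c u s t :: int
  assumes n: "n > 0" and inv: "[c * u = 1] (mod n)" and t: "t \<in> {0..<n}"
  shows "(THE e. e \<in> {0..<n} \<and> (s + c * e) mod n = t) = (u * (t - s)) mod n"
proof (rule the_equality)
  have "[s + c * ((u * (t - s)) mod n) = s + c * (u * (t - s))] (mod n)"
    by (intro cong_add cong_scalar_left) simp_all
  also have "[s + c * (u * (t - s)) = s + (t - s)] (mod n)"
    using cong_cancel_inverse[OF inv] by (rule cong_add[OF cong_refl])
  finally have "(s + c * ((u * (t - s)) mod n)) mod n = t mod n"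
    by (simp add: cong_def)
  then show "(u * (t - s)) mod n \<in> {0..<n} \<and> (s + c * ((u * (t - s)) mod n)) mod n = t"
    using n t by simp
next
  fix e assume e: "e \<in> {0..<n} \<and> (s + c * e) mod n = t"
  then have "[t - s = c * e] (mod n)"
    by (metis add_diff_cancel_left' cong_diff cong_mod_left cong_refl)
  then have "[u * (t - s) = u * (c * e)] (mod n)" by (rule cong_scalar_left)
  also have "[u * (c * e) = e] (mod n)"
    using cong_cancel_inverse[OF inv, of e] by (simp add: ac_simps)
  finally show "e = (u * (t - s)) mod n"
    using e by (simp add: cong_def)
qed

lemma lin_op_loc_right_id:
  fixes n a b c u x :: int
  assumes "n > 0" and "[c * u = 1] (mod n)" and "x \<in> {0..<n}"
  shows "loc_right_id n (lin_op n a b c) x = (u * (x - (a + b * x))) mod n"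
  unfolding loc_right_id_def lin_op_def
  using the_affine_solution_mod[OF assms, of "a + b * x"] by (simp add: add.assoc)

lemma lin_op_right_inv:
  fixes n a b c u x :: int
  assumes n: "n > 0" and inv: "[c * u = 1] (mod n)" and "x \<in> {0..<n}"
  shows "right_inv n (lin_op n a b c) x
           = (u * (loc_right_id n (lin_op n a b c) x - (a + b * x))) mod n"
proof -
  have "loc_right_id n (lin_op n a b c) x \<in> {0..<n}"
    using lin_op_loc_right_id[OF assms] n by simp
  from the_affine_solution_mod[OF n inv this, of "a + b * x"] show ?thesis
    unfolding right_inv_def lin_op_def by (simp add: add.assoc)
qed

lemma lin_op_cross_expression:
  fixes n a b c u x y :: int
  assumes n: "n > 0" and inv: "[c * u = 1] (mod n)" and x: "x \<in> {0..<n}"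
  defines "op \<equiv> lin_op n a b c"
  shows "[op (op x y) (right_inv n op x) = b * c * y + (b - u) * (a + (b - 1) * x)] (mod n)"
proof -
  define e where "e = loc_right_id n op x"
  have e: "[e = u * (x - (a + b * x))] (mod n)"
    using lin_op_loc_right_id[OF assms(1-3)] by (simp add: e_def op_def)
  have r: "[c * right_inv n op x = e - (a + b * x)] (mod n)"
  proof -
    have "[c * right_inv n op x = c * (u * (e - (a + b * x)))] (mod n)"
      using lin_op_right_inv[OF assms(1-3)] by (simp add: e_def op_def cong_scalar_left)
    also have "[c * (u * (e - (a + b * x))) = e - (a + b * x)] (mod n)"
      using inv by (rule cong_cancel_inverse)
    finally show ?thesis .
  qed
  have "[op (op x y) (right_inv n op x)
         = a + b * (a + b * x + c * y) + c * right_inv n op x] (mod n)"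
    unfolding op_def lin_op_def cong_mod_left by (intro cong_add cong_scalar_left) simp_all
  also have "[a + b * (a + b * x + c * y) + c * right_inv n op x
              = a + b * (a + b * x + c * y) + (u * (x - (a + b * x)) - (a + b * x))] (mod n)"
    using cong_trans[OF r cong_diff[OF e cong_refl]] by (rule cong_add[OF cong_refl])
  also have "a + b * (a + b * x + c * y) + (u * (x - (a + b * x)) - (a + b * x))
             = b * c * y + (b - u) * (a + (b - 1) * x)"
    by (simp add: algebra_simps)
  finally show ?thesis .
qed

text \<open>Necessity: testing the cross inverse property at x = 0 with y = 0 and y = 1
  forces b c \<equiv> 1.\<close>
lemma cross_inverse_imp_bc_one:
  fixes n a b c u :: int
  assumes n: "n \<ge> 2" and inv: "[c * u = 1] (mod n)"
    and cip: "cross_inverse_prop n (lin_op n a b c)"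
  shows "[b * c = 1] (mod n)"
proof -
  let ?op = "lin_op n a b c"
  have at0: "[y = b * c * y + (b - u) * a] (mod n)" if "y \<in> {0..<n}" for y
  proof -
    have "?op (?op 0 y) (right_inv n ?op 0) = y"
      using cip that n unfolding cross_inverse_prop_def by simp
    then show ?thesis using lin_op_cross_expression[OF _ inv, of 0 a b y] n by simp
  qed
  have zero: "[(b - u) * a = 0] (mod n)" using at0[of 0] n by (simp add: cong_sym_eq)
  have "[1 = b * c + (b - u) * a] (mod n)" using at0[of 1] n by simp
  also have "[b * c + (b - u) * a = b * c + 0] (mod n)"
    using zero by (rule cong_add[OF cong_refl])
  finally show ?thesis by (simp add: cong_sym_eq)
qed

text \<open>Sufficiency: if b c \<equiv> 1 then b is itself an inverse of c, so b \<equiv> u and the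
  closed form reduces to y.\<close>
lemma bc_one_imp_cross_inverse:
  fixes n a b c u :: int
  assumes n: "n > 0" and inv: "[c * u = 1] (mod n)" and bc: "[b * c = 1] (mod n)"
  shows "cross_inverse_prop n (lin_op n a b c)"
  unfolding cross_inverse_prop_def
proof (intro ballI)
  let ?op = "lin_op n a b c"
  fix x y assume x: "x \<in> {0..<n}" and y: "y \<in> {0..<n}"
  have "[b = b * c * u] (mod n)"
    using cong_scalar_left[OF inv, of b] by (simp add: mult.assoc cong_sym)
  also have "[b * c * u = u] (mod n)" using cong_scalar_right[OF bc, of u] by simp
  finally have "[b - u = 0] (mod n)" by (simp add: cong_diff_iff_cong_0)
  then have collapse: "[b * c * y + (b - u) * (a + (b - 1) * x) = y] (mod n)"
    using cong_add[OF cong_scalar_right[OF bc] cong_scalar_right] by fastforce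
  have "[?op (?op x y) (right_inv n ?op x) = y] (mod n)"
    using cong_trans[OF lin_op_cross_expression[OF n inv x] collapse] .
  moreover have "?op (?op x y) (right_inv n ?op x) \<in> {0..<n}"
    using n by (simp add: lin_op_def)
  ultimately show "?op (?op x y) (right_inv n ?op x) = y"
    using y by (auto intro: cong_less_imp_eq_int)
qed

theorem mainTheorem17:
  fixes n a b c :: int
  assumes "n \<ge> 2"
    and "a \<in> {0..<n}" and "b \<in> {0..<n}" and "c \<in> {0..<n}"
    and "a \<noteq> 0"
    and "coprime c n"
  shows "cross_inverse_prop n (lin_op n a b c) \<longleftrightarrow> [b * c = 1] (mod n)"
proof -
  obtain u where inv: "[c * u = 1] (mod n)"
    using assms(6) cong_solve_coprime_int by blast
  have "n > 0" using assms(1) by simp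
  then show ?thesis
    using cross_inverse_imp_bc_one[OF assms(1) inv] bc_one_imp_cross_inverse[OF _ inv]
    by blast
qed

end
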